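(* Let $d\ge3$ be odd and $m$ an integer with $d+1<m$. Then for all $1\le i\le m-d$, \[ \eta(d,m+1,i)=\eta(d,m,i)+\eta(d,m,i-1)+\eta(d-2,m-1,i), \] where, by convention, $\eta(d,m,0)=\eta(d,m,m-d)=0$ (so for $i=1$ the identity reads $\eta(d,m+1,1)=\eta(d,m,1)+\eta(d-2,m-1,1)$ and for $i=m-d$ it reads $\eta(d,m+1,m-d)=\eta(d-2,m-1,m-d)+\eta(d,m,m-d-1)$).
   Context: For an odd integer $e\ge1$, an integer $n$ with $e+1<n$, and $1\le i\le n-e-1$, set \[ \eta(e,n,i)=\binom{n-[e/2]-2}{[e/2]+i}\binom{[e/2]+i-1}{[e/2]}, \] and $\eta(e,n,0)=\eta(e,n,n-e)=0$, where $[r]$ denotes the largest integer $\le r$. *)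

theory Defs
  imports Main
begin

text \<open>eta e n i for odd e >= 1, e + 1 < n, 0 <= i <= n - e.
  Values outside the range 0 <= i <= n - e are never used.\<close>
definition eta :: "nat \<Rightarrow> nat \<Rightarrow> nat \<Rightarrow> nat" where
  "eta e n i = (if i = 0 \<or> i = n - e then 0
     else ((n - e div 2 - 2) choose (e div 2 + i)) * ((e div 2 + i - 1) choose (e div 2)))"

end

theory Submission
  imports Defs
begin

text \<open>Write \<open>k = [d/2]\<close>. After the boundary values are seen to agree with the
  binomial product, every term has the form \<open>C(N, \<cdot>) C(\<cdot>, \<cdot>)\<close> with the same
  \<open>N = m - k - 2\<close>, and the identity is Pascal's rule applied once to each factor
  of \<open>\<eta>(d, m + 1, i)\<close>.\<close>

text \<open>At \<open>i = 0\<close> the product vanishes only because \<open>C([e/2] - 1, [e/2]) = 0\<close>,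
  which fails for \<open>e = 1\<close>.\<close>

lemma eta_eq_choose_product:
  assumes "odd e" and "i \<le> n - e" and "0 < i \<or> e \<noteq> 1"
  shows "eta e n i = ((n - e div 2 - 2) choose (e div 2 + i)) * ((e div 2 + i - 1) choose (e div 2))"
proof (cases "i = 0")
  case True
  then have "e div 2 - 1 < e div 2"
    using assms by (auto elim: oddE)
  then show ?thesis
    using True by (simp add: eta_def)
next
  case False
  then have "i = n - e \<Longrightarrow> n - e div 2 - 2 < e div 2 + i"
    using assms(1) by (auto elim!: oddE)
  with False show ?thesis
    by (auto simp: eta_def)
qed

lemma choose_product_pascal:
  fixes N a b :: nat
  shows "(Suc N choose (a + 2)) * ((a + 1) choose (b + 1))
    = (N choose (a + 2)) * ((a + 1) choose (b + 1))
      + (N choose (a + 1)) * (a choose (b + 1)) + (N choose (a + 1)) * (a choose b)"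
  by (simp add: algebra_simps)

theorem proposition6p2:
  fixes d m i :: nat
  assumes "odd d" and "d \<ge> 3" and "d + 1 < m"
    and "1 \<le> i" and "i \<le> m - d"
  shows "eta d (m + 1) i = eta d m i + eta d m (i - 1) + eta (d - 2) (m - 1) i"
proof -
  obtain c where "d = 2 * c + 1"
    using assms(1) oddE by blast
  with assms(2) obtain b where b: "d = 2 * b + 3"
    by (cases c) auto
  obtain j where j: "i = j + 1"
    using assms(4) by (cases i) auto
  define N where "N = m - b - 3"
  have half: "d div 2 = b + 1" "(d - 2) div 2 = b"
    using b by simp_all
  have "eta d (m + 1) i
      = ((m + 1 - d div 2 - 2) choose (d div 2 + i)) * ((d div 2 + i - 1) choose (d div 2))"
    and "eta d m i
      = ((m - d div 2 - 2) choose (d div 2 + i)) * ((d div 2 + i - 1) choose (d div 2))"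
    and "eta d m (i - 1)
      = ((m - d div 2 - 2) choose (d div 2 + (i - 1))) * ((d div 2 + (i - 1) - 1) choose (d div 2))"
    and "eta (d - 2) (m - 1) i
      = ((m - 1 - (d - 2) div 2 - 2) choose ((d - 2) div 2 + i))
        * (((d - 2) div 2 + i - 1) choose ((d - 2) div 2))"
    using assms by (intro eta_eq_choose_product; auto simp: b)+
  moreover have "m + 1 - d div 2 - 2 = Suc N" "m - d div 2 - 2 = N" "m - 1 - (d - 2) div 2 - 2 = N"
    "d div 2 + i = b + j + 2" "d div 2 + (i - 1) = b + j + 1" "(d - 2) div 2 + i = b + j + 1"
    "d div 2 + i - 1 = b + j + 1" "d div 2 + (i - 1) - 1 = b + j" "(d - 2) div 2 + i - 1 = b + j"
    using assms half by (auto simp: N_def b j)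
  ultimately show ?thesis
    using choose_product_pascal[of N "b + j" b] half by (simp only:)
qed

end
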